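(* Let $n\geq2$ be an integer, $\beta\in\mathbb{Z}_p$, and let $A\in\mathbb{L}_p$ be any element with \[A=(-1)^n\zeta_{2(p-1)}p^{\frac{1}{p^{n-1}(p-1)}}\sigma_n\left(1+(-1)^n\beta\zeta_{2(p-1)}p^{\frac{1}{p^{n-1}(p-1)}}\right)+O\!\left(p^{\frac{2}{p^{n-1}(p-1)}}\right).\] Then for every integer $1\leq k\leq 2p-1$, writing $\zeta=\zeta_{2(p-1)}$, \begin{align*} A^k={}&(-1)^{nk}\zeta^k p^{\frac{k}{p^n(p-1)}}+\mathds{1}_{\leq p+1}(k)\cdot k(-1)^{nk}\zeta^k p^{\frac{k+p-1}{p^n(p-1)}}\sigma_{n+1}\\ &+\mathds{1}_2(k)\cdot\zeta^2p^{\frac{2}{p^{n-1}(p-1)}}\sigma_{n+1}^2+\mathds{1}_3(k)\cdot3(-1)^n\zeta^3p^{\frac{2p^2-p+2}{p^{n+1}(p-1)}}\\ &+\mathds{1}_{\leq p-1}(k)\cdot\beta k(-1)^{n(k+1)}\zeta^{k+1}p^{\frac{k+p}{p^n(p-1)}}+\mathds{1}_1(k)\cdot\beta\zeta^2p^{\frac{2}{p^{n-1}(p-1)}}\sigma_{n+1}+O\!\left(p^{\frac{2}{p^{n-1}(p-1)}}\right). \end{align*}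
   Context: $p\geq 3$ is a prime. $\mathbb{L}_p=W(\bar{\mathbb{F}}_p)((p^{\mathbb{Q}}))$ is the $p$-adic Mal'cev–Neumann field: each element is uniquely $\sum_{x\in\mathbb{Q}}[\alpha_x]p^x$ with $\alpha_x\in\bar{\mathbb{F}}_p$, $[\cdot]$ the Teichmüller lift, and well-ordered support; it is an algebraically closed complete field with valuation $v_p(\alpha)=\min$ of the support ($v_p(p)=1$), containing $\bar{\mathbb{Q}}_p$ (hence $\mathbb{Z}_p$) via a fixed continuous embedding. For $x\in\mathbb{Q}$, $p^x$ denotes $[1]p^x$. For $r\in\mathbb{Q}$, "$\alpha=\beta+O(p^r)$" means $v_p(\alpha-\beta)\geq r$. For $n\geq1$, $\sigma_n=\sum_{k=n}^{\infty}p^{-1/p^k}\in\mathbb{L}_p$. $\zeta_{2(p-1)}\in W(\bar{\mathbb{F}}_p)$ is a fixed primitive $2(p-1)$-th root of unity. For an integer $s\geq1$, $\mathds{1}_{\leq s}$ is the indicator function of $\{1,\dots,s\}$ and $\mathds{1}_s$ is the indicator function of $\{s\}$. *)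

theory Defs
  imports Complex_Main "HOL-Computational_Algebra.Primes"
begin

text \<open>The valuation v is only meaningful on nonzero elements; v 0 is treated as +infinity
through the predicate below.\<close>

text \<open>"x = y + O(p^r)": v(x - y) \<ge> r (with v(0) = +infinity).\<close>
definition approx :: "('a::field \<Rightarrow> rat) \<Rightarrow> 'a \<Rightarrow> 'a \<Rightarrow> rat \<Rightarrow> bool" where
  "approx v x y r \<longleftrightarrow> x = y \<or> r \<le> v (x - y)"

definition is_valuation :: "('a::field \<Rightarrow> rat) \<Rightarrow> bool" where
  "is_valuation v \<longleftrightarrow>
     (\<forall>x y. x \<noteq> 0 \<longrightarrow> y \<noteq> 0 \<longrightarrow> v (x * y) = v x + v y) \<and>
     (\<forall>x y. x \<noteq> 0 \<longrightarrow> y \<noteq> 0 \<longrightarrow> x + y \<noteq> 0 \<longrightarrow> min (v x) (v y) \<le> v (x + y))"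

definition in_Zp :: "('a::field \<Rightarrow> rat) \<Rightarrow> 'a \<Rightarrow> bool" where
  "in_Zp v b \<longleftrightarrow> (\<forall>r::rat. \<exists>m::int. approx v b (of_int m) r)"

end

(* With xi = 1 / (p^n (p - 1)) and the splitting sigma_n = p^(-1/p^n) + sigma_(n+1), the hypothesis
   reads A = X (1 + alpha) (1 + gamma) + O(p^(2 p xi)), where X = (-1)^n zeta p^xi,
   alpha = p^(1/p^n) sigma_(n+1) and gamma = beta X p^(1/p^n) have valuations xi, (p - 2 + 1/p) xi
   and p xi.  Both sides being integral, A^k agrees with X^k (1 + y)^k, y = alpha + gamma + alpha gamma,
   to the same precision.  Expanding (1 + y)^k to second order, the cubic remainder, the part
   C(k,2) X^k (y^2 - alpha^2), and the terms k X^k alpha, k X^k gamma, k X^k alpha gamma,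
   C(k,2) X^k alpha^2 all have valuation at least 2 p xi, except for the small k kept in the
   expansion.  For k = 3 alpha^2 is replaced by the square of its leading part
   alpha_0 = p^(1/p^n - 1/p^(n+1)), at a cost governed by the valuation of sigma_(n+2). *)

theory Submission
  imports Defs
begin

definition val_ge :: "('a::field \<Rightarrow> rat) \<Rightarrow> 'a \<Rightarrow> rat \<Rightarrow> bool" where
  "val_ge v x r \<longleftrightarrow> x = 0 \<or> r \<le> v x"

lemma approx_iff_val_ge: "approx v x y r \<longleftrightarrow> val_ge v (x - y) r"
  by (auto simp: approx_def val_ge_def)

lemma approx_refl [simp]: "approx v x x r"
  by (simp add: approx_def)

lemma val_ge_0 [simp]: "val_ge v 0 r"
  by (simp add: val_ge_def)

lemma val_ge_mono: "val_ge v x r \<Longrightarrow> s \<le> r \<Longrightarrow> val_ge v x s"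
  by (auto simp: val_ge_def)

lemma approx_if_small:
  assumes "\<not> c \<Longrightarrow> val_ge v x r"
  shows "approx v x (if c then x else 0) r"
  using assms by (simp add: approx_iff_val_ge)

locale valued_field =
  fixes v :: "'a::field \<Rightarrow> rat"
  assumes valuation: "is_valuation v"
begin

lemma v_mult: "x \<noteq> 0 \<Longrightarrow> y \<noteq> 0 \<Longrightarrow> v (x * y) = v x + v y"
  using valuation by (simp add: is_valuation_def)

lemma v_add: "x \<noteq> 0 \<Longrightarrow> y \<noteq> 0 \<Longrightarrow> x + y \<noteq> 0 \<Longrightarrow> min (v x) (v y) \<le> v (x + y)"
  using valuation by (simp add: is_valuation_def)

lemma v_one [simp]: "v 1 = 0"
  using v_mult [of 1 1] by simp

lemma v_uminus [simp]: "v (- x) = v x"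
proof (cases "x = 0")
  case False
  have "v (-1) + v (-1) = 0"
    using v_mult [of "-1" "-1"] by simp
  then have "v (-1) = 0" by simp
  with False show ?thesis
    using v_mult [of "-1" x] by simp
qed simp

lemma v_power: "x \<noteq> 0 \<Longrightarrow> v (x ^ m) = of_nat m * v x"
  by (induction m) (simp_all add: v_mult algebra_simps)

lemma v_root_of_unity:
  assumes "x ^ m = 1" "m > 0"
  shows "v x = 0"
proof -
  have "x \<noteq> 0"
    using assms by (metis power_0_left zero_neq_one not_gr0)
  then have "of_nat m * v x = 0"
    using assms v_power [of x m] by simp
  with assms(2) show ?thesis by simp
qed

lemma val_ge_1: "r \<le> 0 \<Longrightarrow> val_ge v 1 r"
  by (simp add: val_ge_def)

lemma val_ge_add:
  assumes "val_ge v x r" "val_ge v y r"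
  shows "val_ge v (x + y) r"
proof (cases "x = 0 \<or> y = 0 \<or> x + y = 0")
  case False
  then have "min (v x) (v y) \<le> v (x + y)"
    by (intro v_add) auto
  with assms False show ?thesis by (auto simp: val_ge_def)
qed (use assms in \<open>auto simp: val_ge_def\<close>)

lemma val_ge_mult: "val_ge v x r \<Longrightarrow> val_ge v y s \<Longrightarrow> val_ge v (x * y) (r + s)"
  by (cases "x = 0 \<or> y = 0") (auto simp: val_ge_def v_mult)

lemma val_ge_mult_integral: "val_ge v x 0 \<Longrightarrow> val_ge v y r \<Longrightarrow> val_ge v (x * y) r"
  using val_ge_mult [of x 0 y r] by simp

lemma val_ge_power: "val_ge v x r \<Longrightarrow> val_ge v (x ^ m) (of_nat m * r)"
proof (induction m)
  case 0
  then show ?case by (simp add: val_ge_1)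
next
  case (Suc m)
  then have "val_ge v (x * x ^ m) (r + of_nat m * r)"
    by (intro val_ge_mult)
  then show ?case by (simp add: algebra_simps)
qed

lemma val_ge_sum: "(\<And>i. i \<in> S \<Longrightarrow> val_ge v (f i) r) \<Longrightarrow> val_ge v (sum f S) r"
  by (induction S rule: infinite_finite_induct) (auto intro: val_ge_add)

lemma approx_add:
  "approx v x y r \<Longrightarrow> approx v x' y' r \<Longrightarrow> approx v (x + x') (y + y') r"
  using val_ge_add [of "x - y" r "x' - y'"] by (simp add: approx_iff_val_ge algebra_simps)

lemma approx_trans [trans]: "approx v x y r \<Longrightarrow> approx v y z r \<Longrightarrow> approx v x z r"
  using val_ge_add [of "x - y" r "y - z"] by (simp add: approx_iff_val_ge)

lemma val_ge_approx:
  assumes "approx v x y r" "val_ge v y s" "s \<le> r"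
  shows "val_ge v x s"
proof -
  have "val_ge v (x - y + y) s"
    using assms by (intro val_ge_add) (auto simp: approx_iff_val_ge elim: val_ge_mono)
  then show ?thesis
    by simp
qed

lemma approx_power:
  assumes "approx v x y r" "val_ge v x 0" "val_ge v y 0"
  shows "approx v (x ^ m) (y ^ m) r"
proof -
  have "x ^ m - y ^ m = (x - y) * (\<Sum>i<m. y ^ (m - Suc i) * x ^ i)"
    by (rule power_diff_sumr2)
  moreover have "val_ge v (\<Sum>i<m. y ^ (m - Suc i) * x ^ i) 0"
    using assms(2,3) by (intro val_ge_sum val_ge_mult_integral) (auto dest: val_ge_power)
  ultimately show ?thesis
    using val_ge_mult [of "x - y" r] assms(1) by (fastforce simp: approx_iff_val_ge)
qed

lemma val_ge_in_Zp:
  assumes "in_Zp v x" "\<And>m::int. val_ge v (of_int m) 0"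
  shows "val_ge v x 0"
proof -
  obtain m :: int where "approx v x (of_int m) 0"
    using assms(1) by (auto simp: in_Zp_def)
  then have "val_ge v (x - of_int m + of_int m) 0"
    using assms(2) by (intro val_ge_add) (simp_all add: approx_iff_val_ge)
  then show ?thesis by simp
qed

lemma val_ge_binomial_remainder:
  assumes "val_ge v y r" "0 \<le> r" "\<And>m. val_ge v (of_nat m) 0"
  shows "val_ge v ((1 + y) ^ k - 1 - of_nat k * y - of_nat (k choose 2) * y\<^sup>2) (3 * r)"
proof (induction k)
  case 0
  then show ?case by (simp add: numeral_2_eq_2)
next
  case (Suc k)
  have "Suc k choose 2 = k + (k choose 2)"
    by (simp add: numeral_2_eq_2)
  then have step: "(1 + y) ^ Suc k - 1 - of_nat (Suc k) * y - of_nat (Suc k choose 2) * y\<^sup>2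
      = (1 + y) * ((1 + y) ^ k - 1 - of_nat k * y - of_nat (k choose 2) * y\<^sup>2)
        + of_nat (k choose 2) * y ^ 3"
    by (simp add: algebra_simps power2_eq_square power3_eq_cube)
  have "val_ge v (1 + y) 0"
    using assms by (intro val_ge_add val_ge_1) (auto elim: val_ge_mono)
  moreover have "val_ge v (y ^ 3) (3 * r)"
    using val_ge_power [OF assms(1), of 3] by simp
  ultimately show ?case
    unfolding step using Suc assms(3) by (metis val_ge_add val_ge_mult_integral)
qed

end

locale rat_exponential =
  fixes pw :: "rat \<Rightarrow> 'a::field"
  assumes pw_add: "\<And>x y. pw (x + y) = pw x * pw y"
    and pw_nonzero: "\<And>x. pw x \<noteq> 0"
begin

lemma pw_zero [simp]: "pw 0 = 1"
  using pw_add [of 0 0] pw_nonzero [of 0] by simp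

lemma pw_power: "pw x ^ m = pw (of_nat m * x)"
  by (induction m) (simp_all add: pw_add algebra_simps)

lemma pw_uminus: "pw (- x) = inverse (pw x)"
  using pw_add [of "- x" x] pw_nonzero [of x] by (simp add: field_simps)

lemma pw_of_nat_add_mult: "pw ((of_nat m + d) * x) = pw x ^ m * pw (d * x)"
  by (simp add: pw_power pw_add algebra_simps)

end

locale sigma_expansion = valued_field v + rat_exponential pw
  for v :: "'a::field \<Rightarrow> rat" and pw :: "rat \<Rightarrow> 'a" +
  fixes p n :: nat and \<zeta> \<beta> :: 'a and \<sigma> :: "nat \<Rightarrow> 'a"
  assumes p_ge_3: "3 \<le> p" and n_pos: "1 \<le> n"
    and val_ge_of_nat: "\<And>m. val_ge v (of_nat m) 0"
    and v_pw: "\<And>x. v (pw x) = x"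
    and val_ge_zeta: "val_ge v \<zeta> 0" and val_ge_beta: "val_ge v \<beta> 0"
    and sigma_rec: "\<And>m. 1 \<le> m \<Longrightarrow> \<sigma> m = pw (- 1 / of_nat (p ^ m)) + \<sigma> (m + 1)"
    and v_sigma: "\<And>m. 1 \<le> m \<Longrightarrow> v (\<sigma> m) = - 1 / of_nat (p ^ m)"
begin

abbreviation P :: rat where "P \<equiv> of_nat p"

definition \<xi> :: rat where "\<xi> = 1 / (of_nat (p ^ n) * (P - 1))"

lemma P_ge_3: "3 \<le> P"
  using p_ge_3 by simp

lemma inverse_P_pos: "0 < 1 / P"
  using P_ge_3 by simp

lemma inverse_P_le_1: "1 / P \<le> 1"
  using P_ge_3 by simp

lemma xi_pos: "0 < \<xi>"
  using P_ge_3 p_ge_3 by (simp add: \<xi>_def)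

lemma P_power_n: "P ^ n = P * P ^ (n - 1)"
  using n_pos by (cases n) simp_all

lemma exponent_leading: "1 / (of_nat (p ^ (n - 1)) * (P - 1)) = P * \<xi>"
  using P_ge_3 p_ge_3 by (simp add: \<xi>_def P_power_n field_simps)

lemma exponent_precision: "2 / (of_nat (p ^ (n - 1)) * (P - 1)) = 2 * P * \<xi>"
  using exponent_leading by (simp add: divide_inverse)

lemma v_sigma_Suc_n: "v (\<sigma> (n + 1)) = - ((1 - 1 / P) * \<xi>)"
  using v_sigma [of "n + 1"] P_ge_3 p_ge_3 by (simp add: \<xi>_def field_simps)

lemma v_sigma_Suc_Suc_n: "v (\<sigma> (n + 2)) = - ((1 / P - 1 / P\<^sup>2) * \<xi>)"
  using v_sigma [of "n + 2"] P_ge_3 p_ge_3 by (simp add: \<xi>_def field_simps power2_eq_square)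

lemma sigma_Suc_n: "\<sigma> (n + 1) = inverse (pw ((1 - 1 / P) * \<xi>)) + \<sigma> (n + 2)"
proof -
  have "- 1 / of_nat (p ^ (n + 1)) = - ((1 - 1 / P) * \<xi>)"
    using P_ge_3 p_ge_3 by (simp add: \<xi>_def field_simps)
  then show ?thesis
    using sigma_rec [of "n + 1"] by (simp add: pw_uminus)
qed

definition X :: 'a where "X = (-1) ^ n * \<zeta> * pw \<xi>"

definition \<alpha> :: 'a where "\<alpha> = pw ((P - 1) * \<xi>) * \<sigma> (n + 1)"

definition \<gamma> :: 'a where "\<gamma> = \<beta> * X * pw ((P - 1) * \<xi>)"

definition \<alpha>\<^sub>0 :: 'a where "\<alpha>\<^sub>0 = pw ((P - 2 + 1 / P) * \<xi>)"

lemma val_ge_pw: "val_ge v (pw x) x"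
  by (simp add: val_ge_def v_pw)

lemma val_ge_of_nat_mult: "val_ge v z r \<Longrightarrow> val_ge v (of_nat m * z) r"
  by (rule val_ge_mult_integral [OF val_ge_of_nat])

lemma val_ge_X: "val_ge v X \<xi>"
proof -
  have "val_ge v ((-1) ^ n) 0"
    using val_ge_power [of "-1" 0 n] by (simp add: val_ge_def)
  then show ?thesis
    unfolding X_def by (intro val_ge_mult_integral val_ge_zeta val_ge_pw)
qed

lemma val_ge_alpha: "val_ge v \<alpha> ((P - 2 + 1 / P) * \<xi>)"
proof -
  have "val_ge v \<alpha> ((P - 1) * \<xi> + - ((1 - 1 / P) * \<xi>))"
    unfolding \<alpha>_def using v_sigma_Suc_n by (intro val_ge_mult val_ge_pw) (simp add: val_ge_def)
  then show ?thesis
    by (simp add: algebra_simps)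
qed

lemma val_ge_gamma: "val_ge v \<gamma> (P * \<xi>)"
proof -
  have "val_ge v \<gamma> (0 + \<xi> + (P - 1) * \<xi>)"
    unfolding \<gamma>_def by (intro val_ge_mult val_ge_beta val_ge_X val_ge_pw)
  then show ?thesis
    by (simp add: algebra_simps)
qed

lemma val_ge_alpha_minus_alpha0: "val_ge v (\<alpha> - \<alpha>\<^sub>0) ((P - 1 - 1 / P + 1 / P\<^sup>2) * \<xi>)"
proof -
  have "pw ((P - 1) * \<xi>) * inverse (pw ((1 - 1 / P) * \<xi>)) = \<alpha>\<^sub>0"
    unfolding \<alpha>\<^sub>0_def by (simp add: algebra_simps flip: pw_uminus pw_add)
  then have "\<alpha> - \<alpha>\<^sub>0 = pw ((P - 1) * \<xi>) * \<sigma> (n + 2)"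
    unfolding \<alpha>_def sigma_Suc_n by (simp add: algebra_simps)
  moreover have "val_ge v (pw ((P - 1) * \<xi>) * \<sigma> (n + 2)) ((P - 1) * \<xi> + - ((1 / P - 1 / P\<^sup>2) * \<xi>))"
    using v_sigma_Suc_Suc_n by (intro val_ge_mult val_ge_pw) (simp add: val_ge_def)
  ultimately show ?thesis
    by (simp add: algebra_simps)
qed

lemma pw_P_xi: "pw (P * \<xi>) = pw \<xi> * pw ((P - 1) * \<xi>)"
  using pw_of_nat_add_mult [of 1 "P - 1" \<xi>] by simp

lemma main_term_eq:
  "(-1) ^ n * \<zeta> * pw (P * \<xi>) * \<sigma> n * (1 + (-1) ^ n * \<beta> * \<zeta> * pw (P * \<xi>))
     = X * (1 + \<alpha>) * (1 + \<gamma>)"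
proof -
  have "- 1 / of_nat (p ^ n) = - ((P - 1) * \<xi>)"
    using P_ge_3 p_ge_3 by (simp add: \<xi>_def field_simps)
  then have sigma_n: "\<sigma> n = inverse (pw ((P - 1) * \<xi>)) + \<sigma> (n + 1)"
    using sigma_rec [OF n_pos] by (simp add: pw_uminus)
  show ?thesis
    unfolding pw_P_xi sigma_n X_def \<alpha>_def \<gamma>_def using pw_nonzero [of "(P - 1) * \<xi>"]
    by (simp add: field_simps)
qed

lemma val_ge_X_power_mult:
  assumes "val_ge v z (d * \<xi>)" "2 * P \<le> of_nat k + d"
  shows "val_ge v (X ^ k * z) (2 * P * \<xi>)"
proof -
  have "val_ge v (X ^ k * z) (of_nat k * \<xi> + d * \<xi>)"
    by (intro val_ge_mult val_ge_power val_ge_X assms(1))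
  moreover have "2 * P * \<xi> \<le> of_nat k * \<xi> + d * \<xi>"
    using mult_right_mono [OF assms(2) less_imp_le [OF xi_pos]] by (simp add: algebra_simps)
  ultimately show ?thesis
    by (rule val_ge_mono)
qed

lemma val_ge_alpha_mult_gamma: "val_ge v (\<alpha> * \<gamma>) ((P - 2 + 1 / P + P) * \<xi>)"
  using val_ge_mult [OF val_ge_alpha val_ge_gamma] by (simp only: distrib_right [of _ _ \<xi>])

lemma val_ge_alpha_gamma: "val_ge v (\<alpha> + \<gamma> + \<alpha> * \<gamma>) ((P - 2 + 1 / P) * \<xi>)"
proof -
  have "(P - 2 + 1 / P) * \<xi> \<le> P * \<xi>"
    using inverse_P_le_1 xi_pos by (intro mult_right_mono) linarith+
  moreover have "P * \<xi> \<le> (P - 2 + 1 / P + P) * \<xi>"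
    using P_ge_3 inverse_P_pos xi_pos by (intro mult_right_mono) linarith+
  ultimately show ?thesis
    using val_ge_alpha val_ge_gamma val_ge_alpha_mult_gamma
    by (intro val_ge_add) (auto elim: val_ge_mono)
qed

lemma approx_binomial_truncation:
  assumes "val_ge v y ((P - 2 + 1 / P) * \<xi>)"
  shows "approx v (X ^ k * (1 + y) ^ k)
           (X ^ k * (1 + of_nat k * y + of_nat (k choose 2) * y\<^sup>2)) (2 * P * \<xi>)"
proof (cases "k \<le> 2")
  case True
  then have "k = 0 \<or> k = 1 \<or> k = 2" by auto
  then show ?thesis
    by (auto simp: numeral_2_eq_2 power2_eq_square algebra_simps)
next
  case False
  have "0 \<le> (P - 2 + 1 / P) * \<xi>"
    using P_ge_3 xi_pos by simp
  then have "val_ge v ((1 + y) ^ k - 1 - of_nat k * y - of_nat (k choose 2) * y\<^sup>2)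
               (3 * ((P - 2 + 1 / P) * \<xi>))"
    by (rule val_ge_binomial_remainder [OF assms _ val_ge_of_nat])
  then have "val_ge v ((1 + y) ^ k - 1 - of_nat k * y - of_nat (k choose 2) * y\<^sup>2)
               ((3 * (P - 2 + 1 / P)) * \<xi>)"
    by (simp only: mult.assoc)
  moreover have "2 * P \<le> of_nat k + 3 * (P - 2 + 1 / P)"
  proof -
    have "3 \<le> (of_nat k :: rat)"
      using False by simp
    then show ?thesis
      using P_ge_3 inverse_P_pos by (simp only: algebra_simps)
  qed
  ultimately have "val_ge v (X ^ k * ((1 + y) ^ k - 1 - of_nat k * y - of_nat (k choose 2) * y\<^sup>2))
      (2 * P * \<xi>)"
    by (rule val_ge_X_power_mult)
  moreover have "X ^ k * (1 + y) ^ k - X ^ k * (1 + of_nat k * y + of_nat (k choose 2) * y\<^sup>2)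
      = X ^ k * ((1 + y) ^ k - 1 - of_nat k * y - of_nat (k choose 2) * y\<^sup>2)"
    by (simp add: algebra_simps)
  ultimately show ?thesis
    by (simp add: approx_iff_val_ge)
qed

lemma approx_alpha_term:
  "approx v (of_nat k * X ^ k * \<alpha>) (if k \<le> p + 1 then of_nat k * X ^ k * \<alpha> else 0) (2 * P * \<xi>)"
proof (rule approx_if_small)
  assume "\<not> k \<le> p + 1"
  then have "P + 2 \<le> of_nat k"
    by simp
  then have "val_ge v (X ^ k * \<alpha>) (2 * P * \<xi>)"
    using inverse_P_pos by (intro val_ge_X_power_mult [OF val_ge_alpha]) linarith
  then show "val_ge v (of_nat k * X ^ k * \<alpha>) (2 * P * \<xi>)"
    unfolding mult.assoc by (rule val_ge_of_nat_mult)
qed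

lemma approx_gamma_term:
  "approx v (of_nat k * X ^ k * \<gamma>) (if k \<le> p - 1 then of_nat k * X ^ k * \<gamma> else 0) (2 * P * \<xi>)"
proof (rule approx_if_small)
  assume "\<not> k \<le> p - 1"
  then have "P \<le> of_nat k"
    by simp
  then have "val_ge v (X ^ k * \<gamma>) (2 * P * \<xi>)"
    by (intro val_ge_X_power_mult [OF val_ge_gamma]) simp
  then show "val_ge v (of_nat k * X ^ k * \<gamma>) (2 * P * \<xi>)"
    unfolding mult.assoc by (rule val_ge_of_nat_mult)
qed

lemma approx_alpha_gamma_term:
  "approx v (of_nat k * X ^ k * (\<alpha> * \<gamma>)) (if k = 1 then X ^ k * \<alpha> * \<gamma> else 0) (2 * P * \<xi>)"
proof (cases "k = 1")
  case False
  have "val_ge v (X ^ k * (\<alpha> * \<gamma>)) (2 * P * \<xi>)" if "2 \<le> (of_nat k :: rat)"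
    by (rule val_ge_X_power_mult [OF val_ge_alpha_mult_gamma]) (use that inverse_P_pos in linarith)
  moreover have "k = 0 \<or> 2 \<le> (of_nat k :: rat)"
    using False by auto
  ultimately have "val_ge v (of_nat k * X ^ k * (\<alpha> * \<gamma>)) (2 * P * \<xi>)"
    unfolding mult.assoc by (auto intro: val_ge_of_nat_mult)
  with False show ?thesis
    by (simp add: approx_iff_val_ge)
qed (simp add: mult.assoc)

lemma approx_alpha_square_term:
  "approx v (of_nat (k choose 2) * X ^ k * \<alpha>\<^sup>2)
     ((if k = 2 then X ^ k * \<alpha>\<^sup>2 else 0) + (if k = 3 then 3 * X ^ k * \<alpha>\<^sub>0\<^sup>2 else 0)) (2 * P * \<xi>)"
proof -
  consider "k \<le> 1" | "k = 2" | "k = 3" | "4 \<le> k"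
    by linarith
  then show ?thesis
  proof cases
    case 1
    then show ?thesis by (simp add: binomial_eq_0)
  next
    case 3
    have "val_ge v (\<alpha> + \<alpha>\<^sub>0) ((P - 2 + 1 / P) * \<xi>)"
      unfolding \<alpha>\<^sub>0_def by (intro val_ge_add val_ge_alpha val_ge_pw)
    then have "val_ge v ((\<alpha> - \<alpha>\<^sub>0) * (\<alpha> + \<alpha>\<^sub>0)) ((P - 1 - 1 / P + 1 / P\<^sup>2 + (P - 2 + 1 / P)) * \<xi>)"
      using val_ge_mult [OF val_ge_alpha_minus_alpha0] by (simp only: distrib_right [of _ _ \<xi>])
    then have "val_ge v (X ^ 3 * ((\<alpha> - \<alpha>\<^sub>0) * (\<alpha> + \<alpha>\<^sub>0))) (2 * P * \<xi>)"
      by (rule val_ge_X_power_mult) (simp add: algebra_simps)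
    then have "val_ge v (3 * (X ^ 3 * ((\<alpha> - \<alpha>\<^sub>0) * (\<alpha> + \<alpha>\<^sub>0)))) (2 * P * \<xi>)"
      using val_ge_of_nat_mult [of _ _ 3] by simp
    moreover have "k choose 2 = 3"
      using 3 by (simp add: choose_two)
    ultimately show ?thesis
      using 3 by (simp add: approx_iff_val_ge algebra_simps power2_eq_square)
  next
    case 4
    have "val_ge v (\<alpha> * \<alpha>) ((P - 2 + 1 / P + (P - 2 + 1 / P)) * \<xi>)"
      using val_ge_mult [OF val_ge_alpha val_ge_alpha] by (simp only: distrib_right [of _ _ \<xi>])
    then have "val_ge v (X ^ k * (\<alpha> * \<alpha>)) (2 * P * \<xi>)"
    proof (rule val_ge_X_power_mult)
      have "4 \<le> (of_nat k :: rat)"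
        using 4 by simp
      then show "2 * P \<le> of_nat k + (P - 2 + 1 / P + (P - 2 + 1 / P))"
        using inverse_P_pos by linarith
    qed
    with 4 show ?thesis
      by (simp add: approx_iff_val_ge mult.assoc val_ge_of_nat_mult power2_eq_square)
  qed simp
qed

lemma val_ge_quadratic_rest:
  "val_ge v (of_nat (k choose 2) * X ^ k * ((\<alpha> + \<gamma> + \<alpha> * \<gamma>)\<^sup>2 - \<alpha>\<^sup>2)) (2 * P * \<xi>)"
proof (cases "k \<le> 1")
  case False
  have "P * \<xi> \<le> (P - 2 + 1 / P + P) * \<xi>"
    using P_ge_3 inverse_P_pos xi_pos by (intro mult_right_mono) linarith+
  then have "val_ge v (\<gamma> + \<alpha> * \<gamma>) (P * \<xi>)"
    by (intro val_ge_add val_ge_gamma) (rule val_ge_mono [OF val_ge_alpha_mult_gamma])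
  moreover have "val_ge v (\<alpha> + \<gamma> + \<alpha> * \<gamma> + \<alpha>) ((P - 2 + 1 / P) * \<xi>)"
    by (intro val_ge_add val_ge_alpha_gamma val_ge_alpha)
  ultimately have "val_ge v ((\<gamma> + \<alpha> * \<gamma>) * (\<alpha> + \<gamma> + \<alpha> * \<gamma> + \<alpha>))
      (P * \<xi> + (P - 2 + 1 / P) * \<xi>)"
    by (rule val_ge_mult)
  then have "val_ge v ((\<gamma> + \<alpha> * \<gamma>) * (\<alpha> + \<gamma> + \<alpha> * \<gamma> + \<alpha>)) ((P + (P - 2 + 1 / P)) * \<xi>)"
    by (simp only: distrib_right [of _ _ \<xi>])
  then have "val_ge v (X ^ k * ((\<gamma> + \<alpha> * \<gamma>) * (\<alpha> + \<gamma> + \<alpha> * \<gamma> + \<alpha>))) (2 * P * \<xi>)"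
  proof (rule val_ge_X_power_mult)
    have "2 \<le> (of_nat k :: rat)"
      using False by simp
    then show "2 * P \<le> of_nat k + (P + (P - 2 + 1 / P))"
      using inverse_P_pos by linarith
  qed
  moreover have "(\<alpha> + \<gamma> + \<alpha> * \<gamma>)\<^sup>2 - \<alpha>\<^sup>2 = (\<gamma> + \<alpha> * \<gamma>) * (\<alpha> + \<gamma> + \<alpha> * \<gamma> + \<alpha>)"
    by (simp add: algebra_simps power2_eq_square)
  ultimately show ?thesis
    by (simp add: mult.assoc val_ge_of_nat_mult)
qed (simp add: binomial_eq_0)

definition expansion :: "nat \<Rightarrow> 'a" where
  "expansion k = X ^ k
     + (if k \<le> p + 1 then of_nat k * X ^ k * \<alpha> else 0)
     + (if k = 2 then X ^ k * \<alpha>\<^sup>2 else 0)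
     + (if k = 3 then 3 * X ^ k * \<alpha>\<^sub>0\<^sup>2 else 0)
     + (if k \<le> p - 1 then of_nat k * X ^ k * \<gamma> else 0)
     + (if k = 1 then X ^ k * \<alpha> * \<gamma> else 0)"

theorem approx_power_expansion:
  assumes "approx v A (X * (1 + \<alpha>) * (1 + \<gamma>)) (2 * P * \<xi>)"
  shows "approx v (A ^ k) (expansion k) (2 * P * \<xi>)"
proof -
  let ?y = "\<alpha> + \<gamma> + \<alpha> * \<gamma>"
  have product_eq: "X * (1 + \<alpha>) * (1 + \<gamma>) = X * (1 + ?y)"
    by (simp add: algebra_simps)
  have "0 \<le> (P - 2 + 1 / P) * \<xi>"
    using P_ge_3 xi_pos by simp
  then have "val_ge v (1 + ?y) 0"
    by (intro val_ge_add val_ge_1 order_refl val_ge_mono [OF val_ge_alpha_gamma])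
  then have integral_M: "val_ge v (X * (1 + ?y)) 0"
    using xi_pos by (intro val_ge_mult_integral val_ge_mono [OF val_ge_X]) simp_all
  have approx_A: "approx v A (X * (1 + ?y)) (2 * P * \<xi>)"
    using assms product_eq by simp
  moreover have "val_ge v A 0"
    using approx_A integral_M by (rule val_ge_approx) (use xi_pos P_ge_3 in simp)
  ultimately have "approx v (A ^ k) ((X * (1 + ?y)) ^ k) (2 * P * \<xi>)"
    using integral_M by (rule approx_power)
  also have "(X * (1 + ?y)) ^ k = X ^ k * (1 + ?y) ^ k"
    by (rule power_mult_distrib)
  also have "approx v (X ^ k * (1 + ?y) ^ k)
      (X ^ k * (1 + of_nat k * ?y + of_nat (k choose 2) * ?y\<^sup>2)) (2 * P * \<xi>)"
    by (rule approx_binomial_truncation [OF val_ge_alpha_gamma])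
  also have "X ^ k * (1 + of_nat k * ?y + of_nat (k choose 2) * ?y\<^sup>2)
      = X ^ k + of_nat k * X ^ k * \<alpha> + of_nat (k choose 2) * X ^ k * \<alpha>\<^sup>2
        + of_nat k * X ^ k * \<gamma> + of_nat k * X ^ k * (\<alpha> * \<gamma>)
        + of_nat (k choose 2) * X ^ k * (?y\<^sup>2 - \<alpha>\<^sup>2)"
    by (simp add: algebra_simps)
  also have "approx v (X ^ k + of_nat k * X ^ k * \<alpha> + of_nat (k choose 2) * X ^ k * \<alpha>\<^sup>2
        + of_nat k * X ^ k * \<gamma> + of_nat k * X ^ k * (\<alpha> * \<gamma>)
        + of_nat (k choose 2) * X ^ k * (?y\<^sup>2 - \<alpha>\<^sup>2))
      (X ^ k
        + (if k \<le> p + 1 then of_nat k * X ^ k * \<alpha> else 0)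
        + ((if k = 2 then X ^ k * \<alpha>\<^sup>2 else 0) + (if k = 3 then 3 * X ^ k * \<alpha>\<^sub>0\<^sup>2 else 0))
        + (if k \<le> p - 1 then of_nat k * X ^ k * \<gamma> else 0)
        + (if k = 1 then X ^ k * \<alpha> * \<gamma> else 0)
        + 0) (2 * P * \<xi>)"
    by (intro approx_add approx_refl approx_alpha_term approx_alpha_square_term approx_gamma_term
        approx_alpha_gamma_term) (simp add: approx_iff_val_ge val_ge_quadratic_rest)
  also have "X ^ k
        + (if k \<le> p + 1 then of_nat k * X ^ k * \<alpha> else 0)
        + ((if k = 2 then X ^ k * \<alpha>\<^sup>2 else 0) + (if k = 3 then 3 * X ^ k * \<alpha>\<^sub>0\<^sup>2 else 0))
        + (if k \<le> p - 1 then of_nat k * X ^ k * \<gamma> else 0)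
        + (if k = 1 then X ^ k * \<alpha> * \<gamma> else 0)
        + 0 = expansion k"
    by (simp add: expansion_def add.assoc)
  finally show ?thesis .
qed

lemma expansion_eq:
  "(-1) ^ (n * k) * \<zeta> ^ k * pw (of_nat k / (of_nat (p ^ n) * (of_nat p - 1)))
      + (if k \<le> p + 1 then of_nat k * (-1) ^ (n * k) * \<zeta> ^ k
            * pw ((of_nat k + of_nat p - 1) / (of_nat (p ^ n) * (of_nat p - 1))) * \<sigma> (n + 1)
         else 0)
      + (if k = 2 then \<zeta> ^ 2 * pw (2 / (of_nat (p ^ (n - 1)) * (of_nat p - 1))) * \<sigma> (n + 1) ^ 2
         else 0)
      + (if k = 3 then 3 * (-1) ^ n * \<zeta> ^ 3
            * pw ((2 * of_nat p ^ 2 - of_nat p + 2) / (of_nat (p ^ (n + 1)) * (of_nat p - 1)))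
         else 0)
      + (if k \<le> p - 1 then \<beta> * of_nat k * (-1) ^ (n * (k + 1)) * \<zeta> ^ (k + 1)
            * pw ((of_nat k + of_nat p) / (of_nat (p ^ n) * (of_nat p - 1)))
         else 0)
      + (if k = 1 then \<beta> * \<zeta> ^ 2 * pw (2 / (of_nat (p ^ (n - 1)) * (of_nat p - 1))) * \<sigma> (n + 1)
         else 0)
    = expansion k"
proof -
  have nonzero: "of_nat (p ^ n) \<noteq> (0 :: rat)" "P - 1 \<noteq> 0" "P \<noteq> 0"
    using P_ge_3 p_ge_3 by simp_all
  have pw_k: "pw (of_nat k / (of_nat (p ^ n) * (of_nat p - 1))) = pw \<xi> ^ k"
    by (simp add: \<xi>_def pw_power)
  have "pw ((of_nat k + of_nat p - 1) / (of_nat (p ^ n) * (of_nat p - 1)))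
      = pw ((of_nat k + (P - 1)) * \<xi>)"
    using nonzero by (intro arg_cong [where f = pw]) (simp add: \<xi>_def field_simps)
  then have pw_k_p: "pw ((of_nat k + of_nat p - 1) / (of_nat (p ^ n) * (of_nat p - 1)))
      = pw \<xi> ^ k * pw ((P - 1) * \<xi>)"
    by (simp only: pw_of_nat_add_mult)
  have "pw ((of_nat k + of_nat p) / (of_nat (p ^ n) * (of_nat p - 1)))
      = pw ((of_nat (k + 1) + (P - 1)) * \<xi>)"
    using nonzero by (intro arg_cong [where f = pw]) (simp add: \<xi>_def field_simps)
  then have pw_k_p1: "pw ((of_nat k + of_nat p) / (of_nat (p ^ n) * (of_nat p - 1)))
      = pw \<xi> ^ (k + 1) * pw ((P - 1) * \<xi>)"
    by (simp only: pw_of_nat_add_mult)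
  have two_P_xi: "2 / (of_nat (p ^ (n - 1)) * (of_nat p - 1)) = of_nat 2 * (P * \<xi>)"
    unfolding exponent_precision by simp
  have pw_2: "pw (2 / (of_nat (p ^ (n - 1)) * (of_nat p - 1))) = (pw \<xi> * pw ((P - 1) * \<xi>))\<^sup>2"
    unfolding two_P_xi pw_power [of "P * \<xi>" 2, symmetric] pw_P_xi ..
  have exponent_3: "(2 * of_nat p ^ 2 - of_nat p + 2) / (of_nat (p ^ (n + 1)) * (of_nat p - 1))
      = (of_nat 3 + of_nat 2 * (P - 2 + 1 / P)) * \<xi>"
    using nonzero by (simp add: \<xi>_def field_simps power2_eq_square)
  have pw_3: "pw ((2 * of_nat p ^ 2 - of_nat p + 2) / (of_nat (p ^ (n + 1)) * (of_nat p - 1)))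
      = pw \<xi> ^ 3 * \<alpha>\<^sub>0\<^sup>2"
    unfolding exponent_3 pw_of_nat_add_mult by (simp only: \<alpha>\<^sub>0_def mult.assoc pw_power)
  have sign: "((-1 :: 'a) ^ n)\<^sup>2 = 1" "((-1 :: 'a) ^ n) ^ 3 = (-1) ^ n"
    by (cases "even n"; simp)+
  have t1: "(-1) ^ (n * k) * \<zeta> ^ k * pw \<xi> ^ k = X ^ k"
    unfolding X_def power_mult by (simp add: power_mult_distrib)
  have t2: "of_nat k * (-1) ^ (n * k) * \<zeta> ^ k * (pw \<xi> ^ k * pw ((P - 1) * \<xi>)) * \<sigma> (n + 1)
      = of_nat k * X ^ k * \<alpha>"
    unfolding X_def \<alpha>_def power_mult by (simp add: power_mult_distrib)
  have t3: "\<zeta> ^ 2 * (pw \<xi> * pw ((P - 1) * \<xi>))\<^sup>2 * \<sigma> (n + 1) ^ 2 = X ^ 2 * \<alpha>\<^sup>2"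
    unfolding X_def \<alpha>_def by (simp add: power_mult_distrib sign)
  have t4: "3 * (-1) ^ n * \<zeta> ^ 3 * (pw \<xi> ^ 3 * \<alpha>\<^sub>0\<^sup>2) = 3 * X ^ 3 * \<alpha>\<^sub>0\<^sup>2"
    unfolding X_def by (simp add: power_mult_distrib sign)
  have t5: "\<beta> * of_nat k * (-1) ^ (n * (k + 1)) * \<zeta> ^ (k + 1) * (pw \<xi> ^ (k + 1) * pw ((P - 1) * \<xi>))
      = of_nat k * X ^ k * \<gamma>"
    unfolding X_def \<gamma>_def power_mult by (simp add: power_mult_distrib)
  have t6: "\<beta> * \<zeta> ^ 2 * (pw \<xi> * pw ((P - 1) * \<xi>))\<^sup>2 * \<sigma> (n + 1) = X ^ 1 * \<alpha> * \<gamma>"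
    unfolding X_def \<alpha>_def \<gamma>_def by (cases "even n") (simp_all add: power2_eq_square algebra_simps)
  show ?thesis
    unfolding pw_k pw_k_p pw_k_p1 pw_2 pw_3 expansion_def t1 t2 t3 t4 t5 t6
    by (simp cong: if_cong)
qed

end

theorem lemma2p4:
  fixes p :: nat and n :: nat
    and v :: "'a::field \<Rightarrow> rat"
    and pw :: "rat \<Rightarrow> 'a"
    and \<zeta> :: 'a
    and \<sigma> :: "nat \<Rightarrow> 'a"
    and \<beta> A :: 'a
  assumes p: "prime p" "p \<ge> 3"
    and val: "is_valuation v"
    and v_p: "v (of_nat p) = 1"
    and v_int: "\<And>m::int. m \<noteq> 0 \<Longrightarrow> of_int m \<noteq> (0::'a) \<and> 0 \<le> v (of_int m)"
    and pw_add: "\<And>x y. pw (x + y) = pw x * pw y"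
    and pw_one: "pw 1 = of_nat p"
    and pw_nz: "\<And>x. pw x \<noteq> 0"
    and v_pw: "\<And>x. v (pw x) = x"
    and zeta_root: "\<zeta> ^ (2 * (p - 1)) = 1"
    and zeta_prim: "\<And>j. 0 < j \<Longrightarrow> j < 2 * (p - 1) \<Longrightarrow> \<zeta> ^ j \<noteq> 1"
    and sigma_rec: "\<And>m. m \<ge> 1 \<Longrightarrow> \<sigma> m = pw (- 1 / of_nat (p ^ m)) + \<sigma> (m + 1)"
    and sigma_nz: "\<And>m. m \<ge> 1 \<Longrightarrow> \<sigma> m \<noteq> 0"
    and sigma_v: "\<And>m. m \<ge> 1 \<Longrightarrow> v (\<sigma> m) = - 1 / of_nat (p ^ m)"
    and n: "n \<ge> 2"
    and beta: "in_Zp v \<beta>"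
    and A: "approx v A
              ((-1) ^ n * \<zeta> * pw (1 / (of_nat (p ^ (n - 1)) * (of_nat p - 1))) * \<sigma> n *
                 (1 + (-1) ^ n * \<beta> * \<zeta> * pw (1 / (of_nat (p ^ (n - 1)) * (of_nat p - 1)))))
              (2 / (of_nat (p ^ (n - 1)) * (of_nat p - 1)))"
  shows "\<forall>k::nat. 1 \<le> k \<and> k \<le> 2 * p - 1 \<longrightarrow>
    approx v (A ^ k)
     ((-1) ^ (n * k) * \<zeta> ^ k * pw (of_nat k / (of_nat (p ^ n) * (of_nat p - 1)))
      + (if k \<le> p + 1 then of_nat k * (-1) ^ (n * k) * \<zeta> ^ k
            * pw ((of_nat k + of_nat p - 1) / (of_nat (p ^ n) * (of_nat p - 1))) * \<sigma> (n + 1)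
         else 0)
      + (if k = 2 then \<zeta> ^ 2 * pw (2 / (of_nat (p ^ (n - 1)) * (of_nat p - 1))) * \<sigma> (n + 1) ^ 2
         else 0)
      + (if k = 3 then 3 * (-1) ^ n * \<zeta> ^ 3
            * pw ((2 * of_nat p ^ 2 - of_nat p + 2) / (of_nat (p ^ (n + 1)) * (of_nat p - 1)))
         else 0)
      + (if k \<le> p - 1 then \<beta> * of_nat k * (-1) ^ (n * (k + 1)) * \<zeta> ^ (k + 1)
            * pw ((of_nat k + of_nat p) / (of_nat (p ^ n) * (of_nat p - 1)))
         else 0)
      + (if k = 1 then \<beta> * \<zeta> ^ 2 * pw (2 / (of_nat (p ^ (n - 1)) * (of_nat p - 1))) * \<sigma> (n + 1)
         else 0))
     (2 / (of_nat (p ^ (n - 1)) * (of_nat p - 1)))"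
proof -
  interpret valued_field v
    using val by unfold_locales
  have integral_int: "val_ge v (of_int m) 0" for m :: int
    using v_int [of m] by (cases "m = 0") (auto simp: val_ge_def)
  interpret sigma_expansion v pw p n \<zeta> \<beta> \<sigma>
  proof unfold_locales
    show "val_ge v (of_nat m) 0" for m
      using integral_int [of "int m"] by simp
    show "val_ge v \<zeta> 0"
      using v_root_of_unity [OF zeta_root] p by (simp add: val_ge_def)
    show "val_ge v \<beta> 0"
      using val_ge_in_Zp [OF beta integral_int] .
  qed (rule pw_add pw_nz p(2) v_pw sigma_rec sigma_v | use n in linarith)+
  have "approx v A (X * (1 + \<alpha>) * (1 + \<gamma>)) (2 * P * \<xi>)"
    using A unfolding exponent_leading exponent_precision main_term_eq .
  from approx_power_expansion [OF this] show ?thesis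
    unfolding expansion_eq [symmetric] exponent_precision [symmetric] by blast
qed

end
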